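(* Let $\vec{\mathcal U},\vec{\mathcal V},\vec{\mathcal W}\in\Upsilon$ and suppose $\vec{\mathcal V}$ is not empty. Then $(\vec{\mathcal U}*\vec{\mathcal V})*\vec{\mathcal W}=\vec{\mathcal U}*(\vec{\mathcal V}*\vec{\mathcal W})$.
   Context: $W$ is a finite set (the propositional worlds of a propositional language over finitely many variables). Consider finite sequences $\vec{\mathcal U}=(\mathcal U_0,\ldots,\mathcal U_k)$ ($k\ge0$) of mutually disjoint subsets of $W$ (components may be empty, possibly repeatedly). $\vec{\mathcal U}$ is full iff $\bigcup_i\mathcal U_i=W$, empty iff $\bigcup_i\mathcal U_i=\emptyset$; $\Upsilon$ is the set of such sequences which are full or empty. Sequence revision $*:\Upsilon\times\Upsilon\to\Upsilon$: for $\vec{\mathcal U}=(\mathcal U_0,\ldots,\mathcal U_k)$ and $\vec{\mathcal V}=(\mathcal V_0,\ldots,\mathcal V_m)$, if $\vec{\mathcal U}$ is full then $\vec{\mathcal U}*\vec{\mathcal V}$ is the sequence $(\mathcal U_0\cap\mathcal V_0,\ldots,\mathcal U_k\cap\mathcal V_0,\ \mathcal U_0\cap\mathcal V_1,\ldots,\mathcal U_k\cap\mathcal V_1,\ \ldots,\ \mathcal U_0\cap\mathcal V_m,\ldots,\mathcal U_k\cap\mathcal V_m)$ (of length $(k+1)(m+1)$); otherwise $\vec{\mathcal U}*\vec{\mathcal V}=\vec{\mathcal V}$. Equality of sequences means equality as finite sequences. *)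

theory Defs
  imports Main
begin

definition wf_seq :: "'w set \<Rightarrow> 'w set list \<Rightarrow> bool" where
  "wf_seq W us \<longleftrightarrow> us \<noteq> [] \<and> (\<forall>i<length us. us ! i \<subseteq> W) \<and>
     (\<forall>i<length us. \<forall>j<length us. i \<noteq> j \<longrightarrow> us ! i \<inter> us ! j = {})"

definition full_seq :: "'w set \<Rightarrow> 'w set list \<Rightarrow> bool" where
  "full_seq W us \<longleftrightarrow> \<Union>(set us) = W"

definition empty_seq :: "'w set list \<Rightarrow> bool" where
  "empty_seq us \<longleftrightarrow> \<Union>(set us) = {}"

definition Upsilon :: "'w set \<Rightarrow> 'w set list set" where
  "Upsilon W = {us. wf_seq W us \<and> (full_seq W us \<or> empty_seq us)}"

definition seq_rev :: "'w set \<Rightarrow> 'w set list \<Rightarrow> 'w set list \<Rightarrow> 'w set list" where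
  "seq_rev W us vs = (if full_seq W us
     then concat (map (\<lambda>v. map (\<lambda>u. u \<inter> v) us) vs) else vs)"

end

theory Submission
  imports Defs
begin

text \<open>A sequence in \<open>\<Upsilon>\<close> that is not empty is full. If \<open>U\<close> is not full, both sides
  reduce to \<open>V * X\<close>. If \<open>U\<close> is full, then so is \<open>U * V\<close>, and both sides are the
  refinement of \<open>U\<close> by \<open>V\<close> by \<open>X\<close>: the list of all \<open>u \<inter> v \<inter> x\<close>, ordered
  lexicographically by the index in \<open>X\<close>, then in \<open>V\<close>, then in \<open>U\<close>.\<close>

definition refine :: "'a::semilattice_inf list \<Rightarrow> 'a list \<Rightarrow> 'a list" where
  "refine us vs = concat (map (\<lambda>v. map (\<lambda>u. inf u v) us) vs)"

lemma refine_assoc: "refine (refine us vs) xs = refine us (refine vs xs)"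
  unfolding refine_def
  by (induction xs) (simp_all add: map_concat comp_def inf_assoc)

lemma Union_set_refine: "\<Union>(set (refine us vs)) = \<Union>(set us) \<inter> \<Union>(set vs)"
  unfolding refine_def by auto

lemma full_seq_refine:
  "full_seq W us \<Longrightarrow> full_seq W vs \<Longrightarrow> full_seq W (refine us vs)"
  unfolding full_seq_def by (simp add: Union_set_refine)

lemma seq_rev_full: "full_seq W us \<Longrightarrow> seq_rev W us vs = refine us vs"
  unfolding seq_rev_def refine_def by simp

lemma seq_rev_not_full: "\<not> full_seq W us \<Longrightarrow> seq_rev W us vs = vs"
  unfolding seq_rev_def by simp

lemma full_seq_if_not_empty_seq:
  "us \<in> Upsilon W \<Longrightarrow> \<not> empty_seq us \<Longrightarrow> full_seq W us"
  unfolding Upsilon_def by simp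

theorem proposition6:
  fixes W :: "'w set" and U V X :: "'w set list"
  assumes "finite W"
    and "U \<in> Upsilon W" and "V \<in> Upsilon W" and "X \<in> Upsilon W"
    and "\<not> empty_seq V"
  shows "seq_rev W (seq_rev W U V) X = seq_rev W U (seq_rev W V X)"
proof -
  have V_full: "full_seq W V"
    using assms(3,5) by (rule full_seq_if_not_empty_seq)
  show ?thesis
  proof (cases "full_seq W U")
    case True
    then show ?thesis
      by (simp add: seq_rev_full V_full full_seq_refine refine_assoc)
  next
    case False
    then show ?thesis
      by (simp add: seq_rev_not_full)
  qed
qed

end
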